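(* Let $F$ satisfy the standing assumption, let $A\colon X\rightrightarrows X^*$ be monotone, let $T_A=(A+F)^{-1}F$ be its $F$-resolvent, and let $T_{A^{-1}}=(A^{-1}+F^{-1})^{-1}F^{-1}$ be the $F^{-1}$-resolvent of $A^{-1}$. Then $\operatorname{dom}T_{A^{-1}}=F(\operatorname{ran}(A^{-1}+F^{-1}))$, and for every $x^*\in\operatorname{dom}T_{A^{-1}}$ and $y^*\in X^*$, $$y^*=T_{A^{-1}}x^*\iff y^*=F\Big(F^{-1}x^*-T_A\big(F^{-1}\big(y^*+F(F^{-1}x^*-F^{-1}y^* )\big)\big)\Big).$$
   Context: $X$ is a real reflexive Banach space with dual $X^*$ and pairing $\langle\cdot,\cdot\rangle$. Standing assumption: $F\colon X\to X^*$ is single-valued with full domain, maximal monotone, strictly monotone ($\langle x-y,Fx-Fy\rangle>0$ for $x\ne y$), 3*-monotone (for every $(x,x^* )\in X\times X^*$, $\sup_{y\in X}\langle x-y,Fy-x^*\rangle<+\infty$), and surjective (hence bijective, so $F^{-1}\colon X^*\to X$ is single-valued). Inverses of set-valued operators are graph inverses; $T_A$ and $T_{A^{-1}}$ are at most single-valued. *)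

theory Defs
  imports "HOL-Analysis.Analysis"
begin

text \<open>The dual of a real Banach space \<open>'a\<close> is modelled by the Banach space
  of bounded linear functionals \<open>'a \<Rightarrow>\<^sub>L real\<close>; set-valued operators are
  functions into sets.\<close>

definition pairing :: "'a::real_normed_vector \<Rightarrow> ('a \<Rightarrow>\<^sub>L real) \<Rightarrow> real" where
  "pairing x f = blinfun_apply f x"

definition reflexive_space :: "'a::banach itself \<Rightarrow> bool" where
  "reflexive_space _ \<longleftrightarrow>
     (\<forall>\<phi> :: ('a \<Rightarrow>\<^sub>L real) \<Rightarrow>\<^sub>L real. \<exists>x::'a. \<forall>f. blinfun_apply \<phi> f = blinfun_apply f x)"

definition monotone_op :: "('a::real_normed_vector \<Rightarrow> ('a \<Rightarrow>\<^sub>L real) set) \<Rightarrow> bool" where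
  "monotone_op A \<longleftrightarrow>
     (\<forall>x y u v. u \<in> A x \<longrightarrow> v \<in> A y \<longrightarrow> 0 \<le> pairing (x - y) (u - v))"

definition maximal_monotone_op :: "('a::real_normed_vector \<Rightarrow> ('a \<Rightarrow>\<^sub>L real) set) \<Rightarrow> bool" where
  "maximal_monotone_op A \<longleftrightarrow> monotone_op A \<and>
     (\<forall>B. monotone_op B \<longrightarrow> (\<forall>x. A x \<subseteq> B x) \<longrightarrow> B = A)"

definition strictly_monotone :: "('a::real_normed_vector \<Rightarrow> ('a \<Rightarrow>\<^sub>L real)) \<Rightarrow> bool" where
  "strictly_monotone F \<longleftrightarrow> (\<forall>x y. x \<noteq> y \<longrightarrow> 0 < pairing (x - y) (F x - F y))"

definition three_star_monotone :: "('a::real_normed_vector \<Rightarrow> ('a \<Rightarrow>\<^sub>L real)) \<Rightarrow> bool" where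
  "three_star_monotone F \<longleftrightarrow>
     (\<forall>x xs. bdd_above (range (\<lambda>y. pairing (x - y) (F y - xs))))"

definition op_single :: "('a \<Rightarrow> 'b) \<Rightarrow> 'a \<Rightarrow> 'b set" where
  "op_single f x = {f x}"

definition op_plus :: "('a \<Rightarrow> 'b::plus set) \<Rightarrow> ('a \<Rightarrow> 'b set) \<Rightarrow> 'a \<Rightarrow> 'b set" where
  "op_plus A B x = {a + b | a b. a \<in> A x \<and> b \<in> B x}"

definition op_inv :: "('a \<Rightarrow> 'b set) \<Rightarrow> 'b \<Rightarrow> 'a set" where
  "op_inv A y = {x. y \<in> A x}"

definition op_comp :: "('b \<Rightarrow> 'c set) \<Rightarrow> ('a \<Rightarrow> 'b set) \<Rightarrow> 'a \<Rightarrow> 'c set" where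
  "op_comp B A x = \<Union> (B ` A x)"

definition op_dom :: "('a \<Rightarrow> 'b set) \<Rightarrow> 'a set" where
  "op_dom A = {x. A x \<noteq> {}}"

definition op_ran :: "('a \<Rightarrow> 'b set) \<Rightarrow> 'b set" where
  "op_ran A = \<Union> (range A)"

definition resolvent :: "('a \<Rightarrow> 'b::plus set) \<Rightarrow> ('a \<Rightarrow> 'b set) \<Rightarrow> 'a \<Rightarrow> 'a set" where
  "resolvent G A = op_comp (op_inv (op_plus A G)) G"

end

theory Submission
  imports Defs
begin

text \<open>
  Once \<open>F\<close> is known to be a bijection the theorem is pure operator algebra, and
  the proof is organised accordingly.  Strict monotonicity makes \<open>F\<close> injective;
  together with surjectivity \<open>F\<close> is bijective, and the graph inverse of
  \<open>op_single F\<close> becomes \<open>op_single (inv F)\<close>.  Then both resolvents unfold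
  into elementwise descriptions: \<open>t \<in> T\<^sub>A y\<close> iff \<open>F y \<in> A t + F t\<close>, and
  \<open>y\<^sup>* \<in> T\<^sub>A\<^sub>\<inverse> x\<^sup>*\<close> iff \<open>F\<inverse> x\<^sup>* \<in> a + F\<inverse> y\<^sup>*\<close> for some \<open>a\<close> with \<open>y\<^sup>* \<in> A a\<close>.
  The domain formula and the characterisation of \<open>T\<^sub>A\<^sub>\<inverse>\<close> through \<open>T\<^sub>A\<close> are then
  proved for an arbitrary bijection between additive abelian groups, with the
  witness \<open>t = F\<inverse> x\<^sup>* - F\<inverse> y\<^sup>*\<close>.
\<close>

lemma strictly_monotone_inj:
  assumes "strictly_monotone F"
  shows "inj F"
proof (rule injI, rule ccontr)
  fix x y assume "F x = F y" "x \<noteq> y"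
  then show False
    using assms unfolding strictly_monotone_def pairing_def
    by (metis blinfun.zero_left diff_self less_irrefl)
qed

lemma op_inv_op_single_bij:
  assumes "bij F"
  shows "op_inv (op_single F) = op_single (inv F)"
  using assms unfolding op_inv_def op_single_def
  by (auto simp: fun_eq_iff bij_inv_eq_iff bij_is_surj surj_f_inv_f)

lemma resolvent_single_iff:
  "t \<in> resolvent (op_single G) A y \<longleftrightarrow> (\<exists>u \<in> A t. G y = u + G t)"
  unfolding resolvent_def op_comp_def op_plus_def op_inv_def op_single_def by auto

lemma resolvent_single_inv_iff:
  "y \<in> resolvent (op_single H) (op_inv A) x \<longleftrightarrow> (\<exists>a. y \<in> A a \<and> H x = a + H y)"
  unfolding resolvent_single_iff op_inv_def by auto

lemma op_ran_plus_single_iff: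
  "z \<in> op_ran (op_plus (op_inv A) (op_single H)) \<longleftrightarrow> (\<exists>a y. y \<in> A a \<and> z = a + H y)"
  unfolding op_ran_def op_plus_def op_inv_def op_single_def by auto

lemma dom_resolvent_inv:
  fixes F :: "'a::plus \<Rightarrow> 'b"
  assumes "bij F"
  shows "op_dom (resolvent (op_single (inv F)) (op_inv A))
           = F ` op_ran (op_plus (op_inv A) (op_single (inv F)))"
proof (rule set_eqI)
  fix x
  have "x \<in> op_dom (resolvent (op_single (inv F)) (op_inv A))
          \<longleftrightarrow> (\<exists>a y. y \<in> A a \<and> inv F x = a + inv F y)"
    unfolding op_dom_def ex_in_conv[symmetric] resolvent_single_inv_iff by auto
  also have "\<dots> \<longleftrightarrow> inv F x \<in> op_ran (op_plus (op_inv A) (op_single (inv F)))"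
    unfolding op_ran_plus_single_iff by auto
  also have "\<dots> \<longleftrightarrow> x \<in> F ` op_ran (op_plus (op_inv A) (op_single (inv F)))"
    using assms by (force simp: bij_is_surj surj_f_inv_f bij_is_inj intro: image_eqI[of x F "inv F x"])
  finally show "x \<in> op_dom (resolvent (op_single (inv F)) (op_inv A))
                  \<longleftrightarrow> x \<in> F ` op_ran (op_plus (op_inv A) (op_single (inv F)))" .
qed

text \<open>Characterisation of \<open>T\<^sub>A\<^sub>\<inverse>\<close> through \<open>T\<^sub>A\<close>: both sides say that
  \<open>y \<in> A t\<close> for the (forced) value \<open>t = F\<inverse> x - F\<inverse> y\<close>.\<close>
lemma resolvent_inv_iff:
  fixes F :: "'a::ab_group_add \<Rightarrow> 'b::ab_group_add"
  assumes "bij F"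
  shows "y \<in> resolvent (op_single (inv F)) (op_inv A) x \<longleftrightarrow>
         (\<exists>t \<in> resolvent (op_single F) A (inv F (y + F (inv F x - inv F y))).
            y = F (inv F x - t))"
proof -
  have FF: "F (inv F z) = z" and FF': "inv F (F w) = w" for z w
    using assms by (simp_all add: bij_is_surj surj_f_inv_f bij_is_inj)
  have "y \<in> resolvent (op_single (inv F)) (op_inv A) x \<longleftrightarrow> y \<in> A (inv F x - inv F y)"
    unfolding resolvent_single_inv_iff by (metis add_diff_cancel diff_add_cancel)
  also have "\<dots> \<longleftrightarrow> (\<exists>t. (\<exists>u \<in> A t. y + F (inv F x - inv F y) = u + F t)
                       \<and> y = F (inv F x - t))"
  proof
    assume "y \<in> A (inv F x - inv F y)"
    then show "\<exists>t. (\<exists>u \<in> A t. y + F (inv F x - inv F y) = u + F t) \<and> y = F (inv F x - t)"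
      by (intro exI[of _ "inv F x - inv F y"]) (auto simp: FF)
  next
    assume "\<exists>t. (\<exists>u \<in> A t. y + F (inv F x - inv F y) = u + F t) \<and> y = F (inv F x - t)"
    then obtain t u where "u \<in> A t" "y + F (inv F x - inv F y) = u + F t"
      and y: "y = F (inv F x - t)" by blast
    moreover from y have "t = inv F x - inv F y" by (simp add: FF')
    ultimately show "y \<in> A (inv F x - inv F y)" by (metis add_right_cancel)
  qed
  also have "\<dots> \<longleftrightarrow> (\<exists>t \<in> resolvent (op_single F) A (inv F (y + F (inv F x - inv F y))).
                       y = F (inv F x - t))"
    by (auto simp: resolvent_single_iff FF)
  finally show ?thesis .
qed

theorem theorem7p1:
  fixes F :: "'a::banach \<Rightarrow> ('a \<Rightarrow>\<^sub>L real)"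
    and A :: "'a \<Rightarrow> ('a \<Rightarrow>\<^sub>L real) set"
  assumes refl: "reflexive_space TYPE('a)"
    and F_maxmono: "maximal_monotone_op (op_single F)"
    and F_strict: "strictly_monotone F"
    and F_3star: "three_star_monotone F"
    and F_surj: "surj F"
    and A_mono: "monotone_op A"
  shows "op_dom (resolvent (op_inv (op_single F)) (op_inv A))
           = F ` op_ran (op_plus (op_inv A) (op_inv (op_single F)))
       \<and> (\<forall>xs \<in> op_dom (resolvent (op_inv (op_single F)) (op_inv A)). \<forall>ys.
            ys \<in> resolvent (op_inv (op_single F)) (op_inv A) xs \<longleftrightarrow>
            (\<exists>t \<in> resolvent (op_single F) A (inv F (ys + F (inv F xs - inv F ys))).
               ys = F (inv F xs - t)))"
proof -
  have bijF: "bij F"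
    using strictly_monotone_inj[OF F_strict] F_surj by (rule bijI)
  show ?thesis
    unfolding op_inv_op_single_bij[OF bijF]
    using dom_resolvent_inv[OF bijF] resolvent_inv_iff[OF bijF] by blast
qed

end
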